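(* Let $\ket\psi$ be a pure $n$-qubit state, and let $p_1$ be the output distribution of the $1$-copy hidden cut circuit on $\ket\psi$. Let $H=\{\bm s\in\{0,1\}^n : P(\bm s)=1\}$. Then: (i) $H$ is a subgroup of $(\{0,1\}^n,\oplus)$ containing $\bm 0$ and $\bm 1$; (ii) for $\bm s\in\{0,1\}^n$ the following are equivalent: (a) $\bm s\in H$; (b) $P(\bm s'\oplus\bm s)=P(\bm s')$ for all $\bm s'\in\{0,1\}^n$; (c) $\bm s\cdot\bm x=0$ for every $\bm x$ with $p_1(\bm x)>0$.
   Context: Subsystems are bitstrings $\bm s\in\{0,1\}^n$ (qubit $j$ included iff $s_j=1$), $\bm 0,\bm 1$ are the all-zeros and all-ones strings, $\oplus$ is bitwise addition mod 2 and $\bm x\cdot\bm s$ the dot product mod 2. $\rho_{\bm s}=\mathrm{Tr}_{\bar{\bm s}}\ket\psi\bra\psi$ and $P(\bm s)=\mathrm{Tr}(\rho_{\bm s}^2)$ (with $P(\bm 0)=1$). $\mathrm{SWAP}_{\bm s}$ swaps the qubits of subsystem $\bm s$ between two copies of the $n$-qubit space. The $t$-copy hidden cut circuit: an $n$-qubit group register is initialized to $\ket{0^n}$ and a state register to $(\ket\psi\ket\psi)^{\otimes t}$; apply $H^{\otimes n}$ to the group register; apply $\sum_{\bm s}\ket{\bm s}\bra{\bm s}\otimes \mathrm{SWAP}_{\bm s}^{\otimes t}$; apply $H^{\otimes n}$ to the group register; measure the group register in the computational basis; $p_t$ denotes the resulting distribution. *)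

theory Defs
  imports Complex_Main "HOL-Algebra.Group"
begin

text \<open>A bitstring s in {0,1}^n is represented by the set of positions j < n
  with s_j = 1, i.e. by an element of Pow {0..<n}. Bitwise XOR is symmetric difference,
  the all-zeros string is {} and the all-ones string is {0..<n}.
  An n-qubit pure state is given by its amplitudes psi :: nat set => complex on the
  computational basis Pow {0..<n}.\<close>

definition bitxor :: "nat set \<Rightarrow> nat set \<Rightarrow> nat set" where
  "bitxor s s' = (s - s') \<union> (s' - s)"

definition bitdot :: "nat set \<Rightarrow> nat set \<Rightarrow> nat" where
  "bitdot x s = card (x \<inter> s) mod 2"

definition bitgroup :: "nat \<Rightarrow> nat set monoid" where
  "bitgroup n = \<lparr>carrier = Pow {0..<n}, mult = bitxor, one = {}\<rparr>"

definition is_pure_state :: "nat \<Rightarrow> (nat set \<Rightarrow> complex) \<Rightarrow> bool" where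
  "is_pure_state n psi \<longleftrightarrow> (\<Sum>a\<in>Pow {0..<n}. (cmod (psi a))\<^sup>2) = 1"

text \<open>Reduced density matrix rho_s = Tr_{complement of s} |psi><psi|, entries indexed by
  basis strings a, b of subsystem s (subsets of s).\<close>
definition rdm :: "nat \<Rightarrow> (nat set \<Rightarrow> complex) \<Rightarrow> nat set \<Rightarrow> nat set \<Rightarrow> nat set \<Rightarrow> complex" where
  "rdm n psi s a b = (\<Sum>c\<in>Pow ({0..<n} - s). psi (a \<union> c) * cnj (psi (b \<union> c)))"

definition purity :: "nat \<Rightarrow> (nat set \<Rightarrow> complex) \<Rightarrow> nat set \<Rightarrow> complex" where
  "purity n psi s = (\<Sum>a\<in>Pow s. \<Sum>b\<in>Pow s. rdm n psi s a b * rdm n psi s b a)"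

text \<open>The state register consists of 2t copies of the
  n-qubit space (copies 2j and 2j+1 form the j-th pair |psi>|psi>); its basis states are
  functions y with y k a bitstring for k < 2t and y k = {} otherwise.
  A joint amplitude is a function F g y of a group-register basis string g and
  state-register basis state y.\<close>
definition state_basis :: "nat \<Rightarrow> nat \<Rightarrow> (nat \<Rightarrow> nat set) set" where
  "state_basis n t = {y. (\<forall>k<2*t. y k \<subseteq> {0..<n}) \<and> (\<forall>k\<ge>2*t. y k = {})}"

definition hc_init :: "nat \<Rightarrow> (nat set \<Rightarrow> complex) \<Rightarrow> nat set \<Rightarrow> (nat \<Rightarrow> nat set) \<Rightarrow> complex" where
  "hc_init t psi g y = (if g = {} then (\<Prod>k<2*t. psi (y k)) else 0)"

definition hadamard_grp ::
  "nat \<Rightarrow> (nat set \<Rightarrow> (nat \<Rightarrow> nat set) \<Rightarrow> complex) \<Rightarrow> nat set \<Rightarrow> (nat \<Rightarrow> nat set) \<Rightarrow> complex" where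
  "hadamard_grp n F g y =
     complex_of_real (1 / sqrt (2 ^ n)) * (\<Sum>s\<in>Pow {0..<n}. (-1) ^ card (g \<inter> s) * F s y)"

text \<open>SWAP_s tensor t on the basis of the state register (an involution on basis states).\<close>
definition swap_basis :: "nat set \<Rightarrow> nat \<Rightarrow> (nat \<Rightarrow> nat set) \<Rightarrow> nat \<Rightarrow> nat set" where
  "swap_basis s t y k =
     (if k < 2*t then
        (if even k then (y k - s) \<union> (y (k+1) \<inter> s) else (y k - s) \<union> (y (k-1) \<inter> s))
      else y k)"

text \<open>The controlled operator sum_s |s><s| (x) SWAP_s^{(x) t}.\<close>
definition cswap ::
  "nat \<Rightarrow> (nat set \<Rightarrow> (nat \<Rightarrow> nat set) \<Rightarrow> complex) \<Rightarrow> nat set \<Rightarrow> (nat \<Rightarrow> nat set) \<Rightarrow> complex" where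
  "cswap t F g y = F g (swap_basis g t y)"

definition hc_final :: "nat \<Rightarrow> nat \<Rightarrow> (nat set \<Rightarrow> complex) \<Rightarrow> nat set \<Rightarrow> (nat \<Rightarrow> nat set) \<Rightarrow> complex" where
  "hc_final n t psi = hadamard_grp n (cswap t (hadamard_grp n (hc_init t psi)))"

definition hc_dist :: "nat \<Rightarrow> nat \<Rightarrow> (nat set \<Rightarrow> complex) \<Rightarrow> nat set \<Rightarrow> real" where
  "hc_dist n t psi x = (\<Sum>y\<in>state_basis n t. (cmod (hc_final n t psi x y))\<^sup>2)"

end

theory Submission
  imports Defs
begin

text \<open>The output distribution of the one-copy hidden cut circuit is the Walsh-Hadamard
  transform of the purities, \<open>\<Sum>\<^sub>x p\<^sub>1(x) (-1)\<^bsup>x\<cdot>s\<^esup> = P(s)\<close>: summing the characters over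
  \<open>x\<close> collapses the controlled swaps to the swap-test expectation
  \<open>\<langle>\<psi>\<psi>|SWAP\<^sub>s|\<psi>\<psi>\<rangle> = Tr \<rho>\<^sub>s\<^sup>2\<close>. Since \<open>p\<^sub>1\<close> is a probability distribution, \<open>P(s) = 1\<close>
  exactly when \<open>(-1)\<^bsup>x\<cdot>s\<^esup> = 1\<close> on the support of \<open>p\<^sub>1\<close>; so \<open>H\<close> is the annihilator of that
  support, which gives (c) and the subgroup property. For \<open>s \<in> H\<close> the characters of \<open>s' \<oplus> s\<close>
  and \<open>s'\<close> agree on the support, so the transform gives \<open>P(s' \<oplus> s) = P(s')\<close>.\<close>

abbreviation chi :: "nat set \<Rightarrow> nat set \<Rightarrow> 'a::comm_ring_1" where
  "chi x s \<equiv> (-1) ^ card (x \<inter> s)"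

lemma card_Int_bitxor:
  assumes "finite x"
  shows "card (x \<inter> g) + card (x \<inter> h) = card (x \<inter> bitxor g h) + 2 * card (x \<inter> g \<inter> h)"
proof -
  have "x \<inter> g \<union> x \<inter> h = x \<inter> bitxor g h \<union> x \<inter> g \<inter> h"
    and "x \<inter> g \<inter> (x \<inter> h) = x \<inter> g \<inter> h"
    and "x \<inter> bitxor g h \<inter> (x \<inter> g \<inter> h) = {}"
    unfolding bitxor_def by blast+
  then show ?thesis
    using assms card_Un_Int[of "x \<inter> g" "x \<inter> h"]
      card_Un_disjoint[of "x \<inter> bitxor g h" "x \<inter> g \<inter> h"]
    by simp
qed

lemma chi_bitxor:
  assumes "finite x"
  shows "chi x g * chi x h = chi x (bitxor g h)"
proof -
  have "chi x g * chi x h = (-1) ^ (card (x \<inter> bitxor g h) + 2 * card (x \<inter> g \<inter> h))"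
    by (simp only: power_add[symmetric] card_Int_bitxor[OF assms])
  then show ?thesis by (simp add: power_add power_mult)
qed

lemma chi_eq_prod: "finite x \<Longrightarrow> chi x u = (\<Prod>j\<in>x. if j \<in> u then -1 else 1)"
  by (simp add: prod.If_cases Int_def)

lemma sum_chi_Pow:
  assumes "finite N"
  shows "(\<Sum>x\<in>Pow N. chi x u :: 'a::comm_ring_1) = (if N \<inter> u = {} then 2 ^ card N else 0)"
proof -
  have "(\<Sum>x\<in>Pow N. chi x u) =
      (\<Sum>x\<in>Pow N. (\<Prod>j\<in>x. if j \<in> u then -1 else 1) * (\<Prod>j\<in>N - x. 1))"
    using assms by (intro sum.cong refl) (auto simp: chi_eq_prod finite_subset)
  also have "\<dots> = (\<Prod>j\<in>N. (if j \<in> u then -1 else 1) + 1)"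
    by (rule prod_add[OF assms, symmetric])
  also have "\<dots> = (if N \<inter> u = {} then 2 ^ card N else 0)"
    using assms by (cases "N \<inter> u = {}") (auto simp: disjoint_iff intro!: prod_zero)
  finally show ?thesis .
qed

lemma sum_chi_mult3:
  assumes "finite N" "g \<subseteq> N" "h \<subseteq> N" "s \<subseteq> N"
  shows "(\<Sum>x\<in>Pow N. chi x g * chi x h * chi x s :: 'a::comm_ring_1) =
    (if h = bitxor g s then 2 ^ card N else 0)"
proof -
  have "(\<Sum>x\<in>Pow N. chi x g * chi x h * chi x s :: 'a) =
      (\<Sum>x\<in>Pow N. chi x (bitxor (bitxor g h) s))"
    using assms(1) by (intro sum.cong refl) (simp add: chi_bitxor finite_subset)
  also have "\<dots> = (if N \<inter> bitxor (bitxor g h) s = {} then 2 ^ card N else 0)"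
    by (rule sum_chi_Pow[OF assms(1)])
  also have "(N \<inter> bitxor (bitxor g h) s = {}) \<longleftrightarrow> h = bitxor g s"
    using assms(2-4) unfolding bitxor_def by blast
  finally show ?thesis .
qed

definition walsh :: "nat set \<Rightarrow> (nat set \<Rightarrow> complex) \<Rightarrow> nat set \<Rightarrow> complex" where
  "walsh N f x = (\<Sum>g\<in>Pow N. chi x g * f g)"

lemma walsh_mult_cnj:
  "walsh N f x * cnj (walsh N f x) =
    (\<Sum>g\<in>Pow N. \<Sum>h\<in>Pow N. chi x g * chi x h * (f g * cnj (f h)))"
  unfolding walsh_def cnj_sum sum_product by (simp add: mult_ac)

lemma sum_chi_walsh_mult_cnj:
  assumes "finite N" "s \<subseteq> N"
  shows "(\<Sum>x\<in>Pow N. chi x s * (walsh N f x * cnj (walsh N f x))) =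
    2 ^ card N * (\<Sum>g\<in>Pow N. f g * cnj (f (bitxor g s)))"
proof -
  have "(\<Sum>x\<in>Pow N. chi x s * (walsh N f x * cnj (walsh N f x))) =
      (\<Sum>x\<in>Pow N. \<Sum>g\<in>Pow N. \<Sum>h\<in>Pow N. chi x g * chi x h * chi x s * (f g * cnj (f h)))"
    by (simp add: walsh_mult_cnj sum_distrib_left mult_ac)
  also have "\<dots> =
      (\<Sum>g\<in>Pow N. \<Sum>h\<in>Pow N. \<Sum>x\<in>Pow N. chi x g * chi x h * chi x s * (f g * cnj (f h)))"
    by (subst sum.swap) (rule sum.cong[OF refl], rule sum.swap)
  also have "\<dots> =
      (\<Sum>g\<in>Pow N. \<Sum>h\<in>Pow N. if h = bitxor g s then 2 ^ card N * (f g * cnj (f h)) else 0)"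
    using assms by (intro sum.cong refl) (simp add: sum_distrib_right[symmetric] sum_chi_mult3)
  also have "\<dots> = 2 ^ card N * (\<Sum>g\<in>Pow N. f g * cnj (f (bitxor g s)))"
  proof -
    have "bitxor g s \<in> Pow N" if "g \<in> Pow N" for g
      using that assms(2) unfolding bitxor_def by auto
    then show ?thesis
      unfolding sum_distrib_left using assms(1) by (intro sum.cong refl) simp
  qed
  finally show ?thesis .
qed

lemma of_real_inverse_sqrt_squared:
  "complex_of_real (1 / sqrt (2 ^ n)) * complex_of_real (1 / sqrt (2 ^ n)) = 1 / 2 ^ n"
  by (simp flip: of_real_mult)

text \<open>The action of \<open>SWAP\<^sub>g\<close> on a basis state \<open>|a\<rangle>|b\<rangle>\<close> of two copies.\<close>
definition swap_pair :: "nat set \<Rightarrow> nat set \<times> nat set \<Rightarrow> nat set \<times> nat set" where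
  "swap_pair g p = ((fst p - g) \<union> (snd p \<inter> g), (snd p - g) \<union> (fst p \<inter> g))"

lemma swap_pair_swap_pair [simp]: "swap_pair g (swap_pair g p) = p"
  unfolding swap_pair_def by (cases p) auto

lemma swap_pair_bitxor: "swap_pair (bitxor g s) p = swap_pair s (swap_pair g p)"
  unfolding swap_pair_def bitxor_def by auto

lemma swap_pair_in_Pow_times: "p \<in> Pow N \<times> Pow N \<Longrightarrow> swap_pair g p \<in> Pow N \<times> Pow N"
  unfolding swap_pair_def by auto

definition pair_amp :: "(nat set \<Rightarrow> complex) \<Rightarrow> nat set \<times> nat set \<Rightarrow> complex" where
  "pair_amp psi p = psi (fst p) * psi (snd p)"

lemma hadamard_grp_eq_walsh:
  "hadamard_grp n F x y = complex_of_real (1 / sqrt (2 ^ n)) * walsh {0..<n} (\<lambda>g. F g y) x"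
  unfolding hadamard_grp_def walsh_def ..

lemma hadamard_grp_hc_init_one:
  "hadamard_grp n (hc_init 1 psi) g y = complex_of_real (1 / sqrt (2 ^ n)) * pair_amp psi (y 0, y 1)"
proof -
  have "hc_init 1 psi s y = (if s = {} then pair_amp psi (y 0, y 1) else 0)" for s
    unfolding hc_init_def pair_amp_def by (simp add: numeral_2_eq_2 lessThan_Suc)
  then have "walsh {0..<n} (\<lambda>s. hc_init 1 psi s y) g = pair_amp psi (y 0, y 1)"
    unfolding walsh_def by (simp add: if_distrib[of "(*) _"] cong: if_cong)
  then show ?thesis
    unfolding hadamard_grp_eq_walsh by simp
qed

lemma hc_final_one:
  "hc_final n 1 psi x y = 1 / 2 ^ n * walsh {0..<n} (\<lambda>g. pair_amp psi (swap_pair g (y 0, y 1))) x"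
proof -
  have "(swap_basis g 1 y 0, swap_basis g 1 y 1) = swap_pair g (y 0, y 1)" for g
    unfolding swap_basis_def swap_pair_def by auto
  then show ?thesis
    unfolding hc_final_def hadamard_grp_eq_walsh[of n "cswap 1 _"] cswap_def hadamard_grp_hc_init_one
      walsh_def of_real_inverse_sqrt_squared[symmetric]
    by (simp add: sum_distrib_left mult_ac)
qed

lemma bij_betw_state_basis_one:
  "bij_betw (\<lambda>y. (y 0, y 1)) (state_basis n 1) (Pow {0..<n} \<times> Pow {0..<n})"
proof (rule bij_betw_byWitness[where f' = "\<lambda>(a, b) k. if k = 0 then a else if k = 1 then b else {}"])
  show "\<forall>y\<in>state_basis n 1.
      (\<lambda>(a, b) k. if k = 0 then a else if k = 1 then b else {}) (y 0, y 1) = y"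
    by (auto simp: state_basis_def fun_eq_iff)
  have "y 0 \<subseteq> {0..<n} \<and> y 1 \<subseteq> {0..<n}" if "y \<in> state_basis n 1" for y
    using that unfolding state_basis_def by simp
  then show "(\<lambda>y. (y 0, y 1)) ` state_basis n 1 \<subseteq> Pow {0..<n} \<times> Pow {0..<n}"
    by auto
qed (auto simp: state_basis_def subset_iff split: if_splits)

lemma hc_dist_one:
  "hc_dist n 1 psi x = (1 / 2 ^ n)\<^sup>2 *
     (\<Sum>p\<in>Pow {0..<n} \<times> Pow {0..<n}.
        (cmod (walsh {0..<n} (\<lambda>g. pair_amp psi (swap_pair g p)) x))\<^sup>2)"
  unfolding hc_dist_def hc_final_one sum.reindex_bij_betw[OF bij_betw_state_basis_one, symmetric]
  by (simp add: sum_distrib_left norm_divide norm_power power_divide)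

lemma sum_Pow_split:
  assumes "s \<subseteq> N"
  shows "(\<Sum>a\<in>Pow N. f a) = (\<Sum>a\<in>Pow s. \<Sum>c\<in>Pow (N - s). f (a \<union> c))"
proof -
  have "(\<Sum>a\<in>Pow N. f a) = (\<Sum>p\<in>Pow s \<times> Pow (N - s). f (fst p \<union> snd p))"
    by (rule sum.reindex_bij_witness[where i = "\<lambda>p. fst p \<union> snd p" and j = "\<lambda>a. (a \<inter> s, a - s)"])
       (use assms in \<open>auto simp: Int_Diff_Un\<close>)
  then show ?thesis by (simp add: sum.cartesian_product split_def)
qed

lemma purity_eq_swap_expectation:
  assumes "s \<subseteq> {0..<n}"
  shows "purity n psi s =
    (\<Sum>p\<in>Pow {0..<n} \<times> Pow {0..<n}. pair_amp psi p * cnj (pair_amp psi (swap_pair s p)))"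
proof -
  let ?N = "{0..<n}"
  let ?T = "\<lambda>a c b d. psi (a \<union> c) * psi (b \<union> d) * cnj (psi (b \<union> c) * psi (a \<union> d))"
  have "purity n psi s = (\<Sum>a\<in>Pow s. \<Sum>b\<in>Pow s. \<Sum>c\<in>Pow (?N - s). \<Sum>d\<in>Pow (?N - s). ?T a c b d)"
    unfolding purity_def rdm_def by (simp add: sum_product mult_ac)
  also have "\<dots> = (\<Sum>a\<in>Pow s. \<Sum>c\<in>Pow (?N - s). \<Sum>b\<in>Pow s. \<Sum>d\<in>Pow (?N - s). ?T a c b d)"
    by (intro sum.cong refl sum.swap)
  also have "\<dots> = (\<Sum>a\<in>Pow s. \<Sum>c\<in>Pow (?N - s). \<Sum>b\<in>Pow s. \<Sum>d\<in>Pow (?N - s).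
      pair_amp psi (a \<union> c, b \<union> d) * cnj (pair_amp psi (swap_pair s (a \<union> c, b \<union> d))))"
  proof -
    have "swap_pair s (a \<union> c, b \<union> d) = (b \<union> c, a \<union> d)"
      if "a \<subseteq> s" "b \<subseteq> s" "c \<subseteq> ?N - s" "d \<subseteq> ?N - s" for a b c d
      using that unfolding swap_pair_def by auto
    then show ?thesis by (intro sum.cong refl) (simp add: pair_amp_def)
  qed
  also have "\<dots> = (\<Sum>a\<in>Pow ?N. \<Sum>b\<in>Pow ?N. pair_amp psi (a, b) * cnj (pair_amp psi (swap_pair s (a, b))))"
    by (simp only: sum_Pow_split[OF assms])
  finally show ?thesis by (simp add: sum.cartesian_product)
qed

lemma purity_eq_sum_hc_dist_chi:
  assumes "s \<subseteq> {0..<n}"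
  shows "purity n psi s = complex_of_real (\<Sum>x\<in>Pow {0..<n}. hc_dist n 1 psi x * chi x s)"
proof -
  let ?N = "{0..<n}" and ?Y = "Pow {0..<n} \<times> Pow {0..<n}"
  let ?A = "\<lambda>p. pair_amp psi p * cnj (pair_amp psi (swap_pair s p))"
  let ?W = "\<lambda>p. walsh ?N (\<lambda>g. pair_amp psi (swap_pair g p))"
  have "(\<Sum>x\<in>Pow ?N. complex_of_real (hc_dist n 1 psi x) * chi x s) =
      (1 / 2 ^ n)\<^sup>2 * (\<Sum>p\<in>?Y. \<Sum>x\<in>Pow ?N. chi x s * (?W p x * cnj (?W p x)))"
    unfolding hc_dist_one of_real_mult of_real_sum complex_norm_square
    by (subst sum.swap) (simp add: sum_distrib_left sum_distrib_right mult_ac)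
  also have "\<dots> = (1 / 2 ^ n)\<^sup>2 * (\<Sum>p\<in>?Y. 2 ^ n *
      (\<Sum>g\<in>Pow ?N. pair_amp psi (swap_pair g p) * cnj (pair_amp psi (swap_pair s (swap_pair g p)))))"
    using assms by (simp add: sum_chi_walsh_mult_cnj swap_pair_bitxor)
  also have "\<dots> = 1 / 2 ^ n * (\<Sum>g\<in>Pow ?N. \<Sum>p\<in>?Y. ?A (swap_pair g p))"
    by (subst sum.swap) (simp add: sum_distrib_left power2_eq_square)
  also have "\<dots> = 1 / 2 ^ n * (\<Sum>g\<in>Pow ?N. \<Sum>p\<in>?Y. ?A p)"
  proof -
    have "(\<Sum>p\<in>?Y. ?A (swap_pair g p)) = (\<Sum>p\<in>?Y. ?A p)" for g
      by (rule sum.reindex_bij_witness[where i = "swap_pair g" and j = "swap_pair g"])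
         (auto intro: swap_pair_in_Pow_times)
    then show ?thesis by simp
  qed
  also have "\<dots> = (\<Sum>p\<in>?Y. ?A p)"
    by (simp add: card_Pow)
  finally show ?thesis using purity_eq_swap_expectation[OF assms] by simp
qed

lemma sum_psi_mult_cnj:
  assumes "is_pure_state n psi"
  shows "(\<Sum>a\<in>Pow {0..<n}. psi a * cnj (psi a)) = 1"
  using assms unfolding is_pure_state_def complex_norm_square[symmetric] of_real_sum[symmetric] by simp

lemma purity_empty:
  assumes "is_pure_state n psi"
  shows "purity n psi {} = 1"
  using sum_psi_mult_cnj[OF assms] unfolding purity_def rdm_def by simp

lemma purity_full:
  assumes "is_pure_state n psi"
  shows "purity n psi {0..<n} = 1"
proof -
  have "purity n psi {0..<n} =
      (\<Sum>a\<in>Pow {0..<n}. psi a * cnj (psi a)) * (\<Sum>b\<in>Pow {0..<n}. psi b * cnj (psi b))"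
    unfolding purity_def rdm_def sum_product by (simp add: mult_ac)
  then show ?thesis using sum_psi_mult_cnj[OF assms] by simp
qed

lemma hc_dist_nonneg: "hc_dist n t psi x \<ge> 0"
  unfolding hc_dist_def by (simp add: sum_nonneg)

lemma sum_hc_dist:
  assumes "is_pure_state n psi"
  shows "(\<Sum>x\<in>Pow {0..<n}. hc_dist n 1 psi x) = 1"
  using purity_eq_sum_hc_dist_chi[of "{}" n psi] purity_empty[OF assms] by (simp del: of_real_sum)

lemma purity_eq_1_iff:
  assumes "is_pure_state n psi" "s \<subseteq> {0..<n}"
  shows "purity n psi s = 1 \<longleftrightarrow>
    (\<forall>x\<in>Pow {0..<n}. hc_dist n 1 psi x > 0 \<longrightarrow> even (card (x \<inter> s)))"
proof -
  let ?p = "hc_dist n 1 psi"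
  have "purity n psi s = 1 \<longleftrightarrow> (\<Sum>x\<in>Pow {0..<n}. ?p x * chi x s) = 1"
    unfolding purity_eq_sum_hc_dist_chi[OF assms(2)] by (rule of_real_eq_1_iff)
  also have "\<dots> \<longleftrightarrow> (\<Sum>x\<in>Pow {0..<n}. ?p x * (1 - chi x s)) = 0"
    using sum_hc_dist[OF assms(1)] by (simp add: algebra_simps sum_subtractf)
  also have "\<dots> \<longleftrightarrow> (\<forall>x\<in>Pow {0..<n}. ?p x * (1 - chi x s) = 0)"
    by (rule sum_nonneg_eq_0_iff) (auto intro: hc_dist_nonneg simp: minus_one_power_iff)
  also have "\<dots> \<longleftrightarrow> (\<forall>x\<in>Pow {0..<n}. ?p x > 0 \<longrightarrow> even (card (x \<inter> s)))"
    using hc_dist_nonneg[of n 1 psi] by (auto simp: less_le minus_one_power_iff)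
  finally show ?thesis .
qed

lemma purity_bitxor_right:
  assumes "is_pure_state n psi" "s \<subseteq> {0..<n}" "s' \<subseteq> {0..<n}" "purity n psi s = 1"
  shows "purity n psi (bitxor s' s) = purity n psi s'"
proof -
  have "(\<Sum>x\<in>Pow {0..<n}. hc_dist n 1 psi x * chi x (bitxor s' s)) =
      (\<Sum>x\<in>Pow {0..<n}. hc_dist n 1 psi x * chi x s')"
  proof (rule sum.cong[OF refl])
    fix x assume x: "x \<in> Pow {0..<n}"
    show "hc_dist n 1 psi x * chi x (bitxor s' s) = hc_dist n 1 psi x * chi x s'"
    proof (cases "hc_dist n 1 psi x > 0")
      case True
      then have "even (card (x \<inter> s))" using x assms purity_eq_1_iff by blast
      then show ?thesis
        using x chi_bitxor[where 'a = real, of x s' s, symmetric] by (simp add: finite_subset)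
    next
      case False
      then show ?thesis using hc_dist_nonneg[of n 1 psi x] by simp
    qed
  qed
  moreover have "bitxor s' s \<subseteq> {0..<n}" using assms(2,3) unfolding bitxor_def by auto
  ultimately show ?thesis using assms(3) by (simp only: purity_eq_sum_hc_dist_chi)
qed

lemma bitgroup_inv:
  assumes "s \<in> Pow {0..<n}"
  shows "inv\<^bsub>bitgroup n\<^esub> s = s"
proof -
  have "(THE t. t \<in> Pow {0..<n} \<and> bitxor s t = {} \<and> bitxor t s = {}) = s"
    by (rule the_equality) (use assms in \<open>auto simp: bitxor_def\<close>)
  then show ?thesis unfolding m_inv_def bitgroup_def by simp
qed

lemma subgroup_purity_eq_1:
  assumes "is_pure_state n psi"
  shows "subgroup {s \<in> Pow {0..<n}. purity n psi s = 1} (bitgroup n)"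
  (is "subgroup ?H _")
proof
  fix s t assume "s \<in> ?H" "t \<in> ?H"
  then show "s \<otimes>\<^bsub>bitgroup n\<^esub> t \<in> ?H"
    using purity_bitxor_right[OF assms, of t s] unfolding bitgroup_def bitxor_def by auto
qed (use purity_empty[OF assms] bitgroup_inv in \<open>auto simp: bitgroup_def\<close>)

theorem mainTheorem5:
  fixes n :: nat and psi :: "nat set \<Rightarrow> complex" and H :: "nat set set"
  assumes "is_pure_state n psi"
    and "H = {s \<in> Pow {0..<n}. purity n psi s = 1}"
  shows "subgroup H (bitgroup n) \<and> {} \<in> H \<and> {0..<n} \<in> H
    \<and> (\<forall>s \<in> Pow {0..<n}.
          (s \<in> H \<longleftrightarrow> (\<forall>s' \<in> Pow {0..<n}. purity n psi (bitxor s' s) = purity n psi s'))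
        \<and> (s \<in> H \<longleftrightarrow> (\<forall>x \<in> Pow {0..<n}. hc_dist n 1 psi x > 0 \<longrightarrow> bitdot x s = 0)))"
proof -
  have shift_invariant:
    "s \<in> H \<longleftrightarrow> (\<forall>s' \<in> Pow {0..<n}. purity n psi (bitxor s' s) = purity n psi s')" if "s \<in> Pow {0..<n}" for s
  proof
    assume "\<forall>s' \<in> Pow {0..<n}. purity n psi (bitxor s' s) = purity n psi s'"
    then have "purity n psi (bitxor {} s) = 1" using purity_empty[OF assms(1)] by auto
    then show "s \<in> H" using that assms(2) by (simp add: bitxor_def)
  qed (use assms purity_bitxor_right in auto)
  have "s \<in> H \<longleftrightarrow> (\<forall>x \<in> Pow {0..<n}. hc_dist n 1 psi x > 0 \<longrightarrow> bitdot x s = 0)"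
    if "s \<in> Pow {0..<n}" for s
    using that assms purity_eq_1_iff unfolding bitdot_def by (auto simp: even_iff_mod_2_eq_zero)
  with shift_invariant show ?thesis
    using assms subgroup_purity_eq_1 purity_empty purity_full by auto
qed

end
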